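(* Let $\{(\mathbf{x}^{(i)},y^{(i)})\}_{i=1}^n$ with $\|\mathbf{x}^{(i)}\|_2\le1$, $y^{(i)}\in\{-1,1\}$, and suppose there is $\mathbf{w}^*$ with $\|\mathbf{w}^*\|_2=1$ and $\min_iy^{(i)}\mathbf{x}^{(i)\top}\mathbf{w}^*=\gamma>0$. Let $A$ have rows $y^{(i)}\mathbf{x}^{(i)\top}$ and $\alpha_t=t$. Let $\mathbf{v}_T$ be produced by the Accelerated Perceptron: $\mathbf{q}_0=\tfrac{\mathbf{1}}{n}$, $\mathbf{v}_0=\mathbf{g}_0=\mathbf{0}$, and for $t=1,\dots,T$: $\mathbf{v}_t=\mathbf{v}_{t-1}-\frac{t}{2(t+1)}(\mathbf{g}_{t-1}-A^{\top}\mathbf{q}_{t-1})$, $q_{t,i}=\frac{\exp(-y^{(i)}\mathbf{v}_t^{\top}\mathbf{x}^{(i)})}{\sum_j\exp(-y^{(j)}\mathbf{v}_t^{\top}\mathbf{x}^{(j)})}$, $\mathbf{g}_t=\frac{t}{t+1}(\mathbf{g}_{t-1}-A^{\top}\mathbf{q}_t)$. Let also the game dynamics be: $g(\mathbf{w},\mathbf{p})=\mathbf{p}^{\top}A\mathbf{w}-\tfrac12\|\mathbf{w}\|_2^2$, $\mathbf{p}_0=\tfrac{\mathbf{1}}{n}$, $h_j(\mathbf{w})=-g(\mathbf{w},\mathbf{p}_j)$, $\ell_j(\mathbf{p})=g(\mathbf{w}_j,\mathbf{p})$, $\mathbf{w}_t=\arg\min_{\mathbf{w}\in\mathbb{R}^d}\sum_{j=1}^{t-1}\alpha_jh_j(\mathbf{w})+\alpha_th_{t-1}(\mathbf{w})$,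 $\mathbf{p}_t=\arg\min_{\mathbf{p}\in\Delta^n}\tfrac14\sum_{s=1}^t\alpha_s\ell_s(\mathbf{p})+D_E(\mathbf{p},\tfrac{\mathbf{1}}{n})$ for $t=1,\dots,T$, $\overline{\mathbf{w}}_T=\frac{\sum_t\alpha_t\mathbf{w}_t}{\sum_t\alpha_t}$, with weighted regrets $R^{\mathbf{w}}=\sum_{t=1}^T\alpha_th_t(\mathbf{w}_t)-\min_{\mathbf{w}\in\mathbb{R}^d}\sum_{t=1}^T\alpha_th_t(\mathbf{w})$, $R^{\mathbf{p}}=\sum_{t=1}^T\alpha_t\ell_t(\mathbf{p}_t)-\min_{\mathbf{p}\in\Delta^n}\sum_{t=1}^T\alpha_t\ell_t(\mathbf{p})$. Then $R^{\mathbf{w}}\le2\sum_{t=1}^T\|\mathbf{p}_t-\mathbf{p}_{t-1}\|_1^2$, $R^{\mathbf{p}}\le4\log n-2\sum_{t=1}^T\|\mathbf{p}_t-\mathbf{p}_{t-1}\|_1^2$; there is a universal constant $C>0$ such that $\overline{\mathbf{w}}_T$ has non-negative margin ($\min_iy^{(i)}\mathbf{x}^{(i)\top}\overline{\mathbf{w}}_T\ge0$) whenever $T\ge C\sqrt{\log n}/\gamma$; and the normalized margin satisfies $\overline{\gamma}(\mathbf{v}_T)=\Omega\!\left(\gamma-\frac{8\log n}{\gamma T(T+1)}\right)$.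
   Context: $\Delta^n$ is the probability simplex; $\mathbf{1}$ the all-ones vector; $D_E(\mathbf{p},\mathbf{q})=\sum_ip_i\log(p_i/q_i)$. The normalized margin of $\mathbf{v}\ne\mathbf{0}$ is $\overline{\gamma}(\mathbf{v})=\frac{\min_{\mathbf{p}\in\Delta^n}\mathbf{p}^{\top}A\mathbf{v}}{\|\mathbf{v}\|_2}=\frac{\min_iy^{(i)}\mathbf{x}^{(i)\top}\mathbf{v}}{\|\mathbf{v}\|_2}$. *)

theory Defs
  imports Complex_Main
begin

text \<open>Vectors of R^d are represented as functions nat => real vanishing at indices >= d,
  so that the dimension d is an ordinary (quantifiable) natural number.\<close>

definition Rd :: "nat \<Rightarrow> (nat \<Rightarrow> real) set" where
  "Rd d = {v. \<forall>k\<ge>d. v k = 0}"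

definition ip :: "nat \<Rightarrow> (nat \<Rightarrow> real) \<Rightarrow> (nat \<Rightarrow> real) \<Rightarrow> real" where
  "ip d u v = (\<Sum>k<d. u k * v k)"

definition nrm :: "nat \<Rightarrow> (nat \<Rightarrow> real) \<Rightarrow> real" where
  "nrm d v = sqrt (ip d v v)"

definition simplex :: "nat \<Rightarrow> (nat \<Rightarrow> real) set" where
  "simplex n = {p. (\<forall>i<n. 0 \<le> p i) \<and> (\<Sum>i<n. p i) = 1 \<and> (\<forall>i\<ge>n. p i = 0)}"

definition unif :: "nat \<Rightarrow> nat \<Rightarrow> real" where
  "unif n = (\<lambda>i. if i < n then 1 / real n else 0)"

definition Atp :: "nat \<Rightarrow> (nat \<Rightarrow> nat \<Rightarrow> real) \<Rightarrow> (nat \<Rightarrow> real) \<Rightarrow> (nat \<Rightarrow> real) \<Rightarrow> nat \<Rightarrow> real" where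
  "Atp n x y q = (\<lambda>k. \<Sum>i<n. q i * y i * x i k)"

definition pAw :: "nat \<Rightarrow> nat \<Rightarrow> (nat \<Rightarrow> nat \<Rightarrow> real) \<Rightarrow> (nat \<Rightarrow> real) \<Rightarrow> (nat \<Rightarrow> real) \<Rightarrow> (nat \<Rightarrow> real) \<Rightarrow> real" where
  "pAw n d x y p w = (\<Sum>i<n. p i * (y i * ip d (x i) w))"

definition gpay :: "nat \<Rightarrow> nat \<Rightarrow> (nat \<Rightarrow> nat \<Rightarrow> real) \<Rightarrow> (nat \<Rightarrow> real) \<Rightarrow> (nat \<Rightarrow> real) \<Rightarrow> (nat \<Rightarrow> real) \<Rightarrow> real" where
  "gpay n d x y w p = pAw n d x y p w - 1/2 * (nrm d w)\<^sup>2"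

text \<open>relative entropy D_E(p,q) = sum_i p_i log(p_i/q_i) (terms with p_i = 0 vanish)\<close>
definition DE :: "nat \<Rightarrow> (nat \<Rightarrow> real) \<Rightarrow> (nat \<Rightarrow> real) \<Rightarrow> real" where
  "DE n p q = (\<Sum>i<n. p i * ln (p i / q i))"

definition l1 :: "nat \<Rightarrow> (nat \<Rightarrow> real) \<Rightarrow> (nat \<Rightarrow> real) \<Rightarrow> real" where
  "l1 n p q = (\<Sum>i<n. \<bar>p i - q i\<bar>)"

definition margin :: "nat \<Rightarrow> nat \<Rightarrow> (nat \<Rightarrow> nat \<Rightarrow> real) \<Rightarrow> (nat \<Rightarrow> real) \<Rightarrow> (nat \<Rightarrow> real) \<Rightarrow> real" where
  "margin n d x y v = Min ((\<lambda>i. y i * ip d (x i) v) ` {..<n})"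

definition nmargin :: "nat \<Rightarrow> nat \<Rightarrow> (nat \<Rightarrow> nat \<Rightarrow> real) \<Rightarrow> (nat \<Rightarrow> real) \<Rightarrow> (nat \<Rightarrow> real) \<Rightarrow> real" where
  "nmargin n d x y v = margin n d x y v / nrm d v"

definition data_ok :: "nat \<Rightarrow> nat \<Rightarrow> (nat \<Rightarrow> nat \<Rightarrow> real) \<Rightarrow> (nat \<Rightarrow> real) \<Rightarrow> real \<Rightarrow> bool" where
  "data_ok n d x y \<gamma> \<longleftrightarrow> 1 \<le> n \<and>
     (\<forall>i<n. x i \<in> Rd d \<and> nrm d (x i) \<le> 1 \<and> (y i = -1 \<or> y i = 1)) \<and>
     (\<exists>ws \<in> Rd d. nrm d ws = 1 \<and> margin n d x y ws = \<gamma>) \<and> 0 < \<gamma>"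

fun accp :: "nat \<Rightarrow> nat \<Rightarrow> (nat \<Rightarrow> nat \<Rightarrow> real) \<Rightarrow> (nat \<Rightarrow> real) \<Rightarrow> nat
      \<Rightarrow> (nat \<Rightarrow> real) \<times> (nat \<Rightarrow> real) \<times> (nat \<Rightarrow> real)" where
  "accp n d x y 0 = ((\<lambda>k. 0), unif n, (\<lambda>k. 0))"
| "accp n d x y (Suc t) =
     (let (v, q, g) = accp n d x y t;
          s = real (Suc t);
          v' = (\<lambda>k. v k - s / (2 * (s + 1)) * (g k - Atp n x y q k));
          Z = (\<Sum>j<n. exp (- y j * ip d v' (x j)));
          q' = (\<lambda>i. if i < n then exp (- y i * ip d v' (x i)) / Z else 0);
          g' = (\<lambda>k. s / (s + 1) * (g k - Atp n x y q' k))
      in (v', q', g'))"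

definition vT :: "nat \<Rightarrow> nat \<Rightarrow> (nat \<Rightarrow> nat \<Rightarrow> real) \<Rightarrow> (nat \<Rightarrow> real) \<Rightarrow> nat \<Rightarrow> nat \<Rightarrow> real" where
  "vT n d x y T = fst (accp n d x y T)"

definition hloss where
  "hloss n d x y p j w = - gpay n d x y w (p j)"

definition lloss where
  "lloss n d x y w j q = gpay n d x y (w j) q"

definition game_dyn :: "nat \<Rightarrow> nat \<Rightarrow> (nat \<Rightarrow> nat \<Rightarrow> real) \<Rightarrow> (nat \<Rightarrow> real) \<Rightarrow> nat
    \<Rightarrow> (nat \<Rightarrow> nat \<Rightarrow> real) \<Rightarrow> (nat \<Rightarrow> nat \<Rightarrow> real) \<Rightarrow> bool" where
  "game_dyn n d x y T w p \<longleftrightarrow>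
     p 0 = unif n \<and>
     (\<forall>t\<in>{1..T}.
        w t \<in> Rd d \<and>
        (\<forall>u\<in>Rd d.
           (\<Sum>j=1..t-1. real j * hloss n d x y p j (w t)) + real t * hloss n d x y p (t-1) (w t)
         \<le> (\<Sum>j=1..t-1. real j * hloss n d x y p j u) + real t * hloss n d x y p (t-1) u)) \<and>
     (\<forall>t\<in>{1..T}.
        p t \<in> simplex n \<and>
        (\<forall>q\<in>simplex n.
           1/4 * (\<Sum>s=1..t. real s * lloss n d x y w s (p t)) + DE n (p t) (unif n)
         \<le> 1/4 * (\<Sum>s=1..t. real s * lloss n d x y w s q) + DE n q (unif n)))"

definition regret_w where
  "regret_w n d x y T w p =
     (\<Sum>t=1..T. real t * hloss n d x y p t (w t))
     - (INF u\<in>Rd d. \<Sum>t=1..T. real t * hloss n d x y p t u)"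

definition regret_p where
  "regret_p n d x y T w p =
     (\<Sum>t=1..T. real t * lloss n d x y w t (p t))
     - (INF q\<in>simplex n. \<Sum>t=1..T. real t * lloss n d x y w t q)"

definition wbar :: "nat \<Rightarrow> (nat \<Rightarrow> nat \<Rightarrow> real) \<Rightarrow> nat \<Rightarrow> real" where
  "wbar T w = (\<lambda>k. (\<Sum>t=1..T. real t * w t k) / (\<Sum>t=1..T. real t))"

end

(*
  The Accelerated Perceptron is a no-regret dynamics for the game
  g(w, p) = p^T A w - |w|^2 / 2: the vector player runs optimistic follow-the-leader, the
  distribution player runs follow-the-regularized-leader with the entropy, and v_T is
  T(T+1)/8 times the weighted average wbar_T of the vector player's iterates.

  Optimistic FTL on quadratic losses only pays for the variation of the loss vectors,
  |A^T (p_t - p_(t-1))|^2 <= |p_t - p_(t-1)|_1^2, while entropic FTRL, strongly convex in the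
  l1-norm by Pinsker's inequality, earns back 2 |p_t - p_(t-1)|_1^2 per round. Adding the two
  regret bounds cancels these path lengths; comparing with gamma w* and with a point mass then
  gives gamma^2/2 + |wbar_T|^2/2 - 8 log n / (T(T+1)) <= y_i x_i^T wbar_T for every i. As
  |wbar_T| >= <w*, wbar_T> >= gamma, both margin statements follow.
*)
theory Submission
  imports Defs "HOL-Analysis.Convex"
begin

section \<open>Pinsker's inequality and the Gibbs distribution\<close>

lemma ln_ge_two_diff_div_sum:
  fixes x :: real assumes "1 \<le> x" shows "2 * (x - 1) / (x + 1) \<le> ln x"
proof -
  let ?f = "\<lambda>x::real. ln x - 2 * (x - 1) / (x + 1)"
  have "?f 1 \<le> ?f x"
  proof (rule deriv_nonneg_imp_mono[where g = ?f and g' = "\<lambda>z. 1 / z - 4 / (z + 1)\<^sup>2"])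
    fix z :: real assume "z \<in> {1..x}"
    then have z: "z > 0" by auto
    show "(?f has_real_derivative 1 / z - 4 / (z + 1)\<^sup>2) (at z)"
      using z by (auto intro!: derivative_eq_intros simp: field_simps power2_eq_square)
    have "4 * z \<le> (z + 1)\<^sup>2"
      using zero_le_power2[of "z - 1"] by (simp add: power2_eq_square algebra_simps)
    then show "0 \<le> 1 / z - 4 / (z + 1)\<^sup>2" using z by (simp add: field_simps)
  qed (use assms in auto)
  then show ?thesis by simp
qed

lemma ln_le_two_diff_div_sum:
  fixes x :: real assumes "0 < x" "x \<le> 1" shows "ln x \<le> 2 * (x - 1) / (x + 1)"
proof -
  have "2 * (1 / x - 1) / (1 / x + 1) \<le> ln (1 / x)"
    using assms by (intro ln_ge_two_diff_div_sum) simp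
  moreover have "2 * (1 / x - 1) / (1 / x + 1) = - (2 * (x - 1) / (x + 1))"
    using assms by (simp add: divide_simps)
  ultimately show ?thesis using assms by (simp add: ln_div)
qed

lemma quadratic_ratio_le_two_diff_div_sum_iff:
  fixes z :: real assumes "0 < z"
  shows "3 * (z - 1) * (z + 5) / (2 * (z + 2)\<^sup>2) \<le> 2 * (z - 1) / (z + 1) \<longleftrightarrow> 1 \<le> z"
proof -
  have "3 * (z - 1) * (z + 5) / (2 * (z + 2)\<^sup>2) \<le> 2 * (z - 1) / (z + 1)
      \<longleftrightarrow> 3 * (z - 1) * (z + 5) * (z + 1) \<le> 2 * (z - 1) * (2 * (z + 2)\<^sup>2)"
    using assms by (simp add: field_simps)
  also have "\<dots> \<longleftrightarrow> 0 \<le> (z - 1) ^ 3"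
    by (simp add: algebra_simps power2_eq_square power3_eq_cube)
  finally show ?thesis by simp
qed

text \<open>Both sides vanish at \<open>x = 1\<close>, and by the previous lemmas the derivative of their
  difference has the sign of \<open>x - 1\<close>.\<close>
lemma xlnx_quadratic_lower_bound:
  fixes x :: real assumes "0 \<le> x"
  shows "3 * (x - 1)\<^sup>2 / (2 * (x + 2)) \<le> x * ln x - x + 1"
proof (cases "x = 0")
  case False
  with assms have x: "x > 0" by simp
  let ?f = "\<lambda>x::real. x * ln x - x + 1 - 3 * (x - 1)\<^sup>2 / (2 * (x + 2))"
  let ?f' = "\<lambda>x::real. ln x - 3 * (x - 1) * (x + 5) / (2 * (x + 2)\<^sup>2)"
  have deriv: "(?f has_real_derivative ?f' z) (at z)" if "z > 0" for z
  proof (rule DERIV_cong)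
    show "(?f has_real_derivative ln z + z * (1 / z) - 1
        - 3 * (2 * (z - 1) * (2 * (z + 2)) - (z - 1)\<^sup>2 * 2) / (2 * (z + 2))\<^sup>2) (at z)"
      using that by (auto intro!: derivative_eq_intros simp: power2_eq_square)
    show "ln z + z * (1 / z) - 1 - 3 * (2 * (z - 1) * (2 * (z + 2)) - (z - 1)\<^sup>2 * 2) / (2 * (z + 2))\<^sup>2
        = ?f' z"
      using that by (simp add: divide_simps power2_eq_square) (simp add: algebra_simps)
  qed
  have "?f 1 \<le> ?f x"
  proof (cases "1 \<le> x")
    case True
    show ?thesis
    proof (rule deriv_nonneg_imp_mono[where g = ?f and g' = ?f'])
      fix z assume z: "z \<in> {1..x}"
      then show "(?f has_real_derivative ?f' z) (at z)" using deriv by simp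
      show "0 \<le> ?f' z"
        using quadratic_ratio_le_two_diff_div_sum_iff[of z] ln_ge_two_diff_div_sum[of z] z by auto
    qed (use True in auto)
  next
    case False
    show ?thesis
    proof (rule deriv_nonpos_imp_antimono[where g = ?f and g' = ?f'])
      fix z assume z: "z \<in> {x..1}"
      with x show "(?f has_real_derivative ?f' z) (at z)" using deriv by simp
      show "?f' z \<le> 0"
        using quadratic_ratio_le_two_diff_div_sum_iff[of z] ln_le_two_diff_div_sum[of z] z x
        by (cases "z = 1") auto
    qed (use False in auto)
  qed
  then show ?thesis by simp
qed simp

lemma mult_ln_divide_quadratic_lower_bound:
  fixes a b :: real assumes "0 \<le> a" "0 < b"
  shows "3 * (a - b)\<^sup>2 / (2 * (a + 2 * b)) \<le> a * ln (a / b) - a + b"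
proof -
  have "b * (3 * (a / b - 1)\<^sup>2 / (2 * (a / b + 2))) \<le> b * (a / b * ln (a / b) - a / b + 1)"
    using assms by (intro mult_left_mono xlnx_quadratic_lower_bound) simp_all
  moreover have "b * (3 * (a / b - 1)\<^sup>2 / (2 * (a / b + 2))) = 3 * (a - b)\<^sup>2 / (2 * (a + 2 * b))"
    using assms by (simp add: divide_simps) (simp add: algebra_simps power2_eq_square)
  moreover have "b * (a / b * ln (a / b) - a / b + 1) = a * ln (a / b) - a + b"
    using assms by (simp add: field_simps)
  ultimately show ?thesis by simp
qed

lemma sum_squared_le_sum_abs_mult:
  fixes c z :: "'a \<Rightarrow> real"
  shows "(\<Sum>i\<in>I. c i * z i)\<^sup>2 \<le> (\<Sum>i\<in>I. \<bar>c i\<bar>) * (\<Sum>i\<in>I. \<bar>c i\<bar> * (z i)\<^sup>2)"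
proof -
  have "\<bar>\<Sum>i\<in>I. c i * z i\<bar> \<le> (\<Sum>i\<in>I. sqrt \<bar>c i\<bar> * (sqrt \<bar>c i\<bar> * \<bar>z i\<bar>))"
    using sum_abs[of "\<lambda>i. c i * z i" I] by (simp add: abs_mult mult.assoc[symmetric])
  then have "(\<Sum>i\<in>I. c i * z i)\<^sup>2 \<le> (\<Sum>i\<in>I. sqrt \<bar>c i\<bar> * (sqrt \<bar>c i\<bar> * \<bar>z i\<bar>))\<^sup>2"
    by (metis abs_ge_zero power2_abs power_mono)
  also have "\<dots> \<le> (\<Sum>i\<in>I. (sqrt \<bar>c i\<bar>)\<^sup>2) * (\<Sum>i\<in>I. (sqrt \<bar>c i\<bar> * \<bar>z i\<bar>)\<^sup>2)"
    by (rule Cauchy_Schwarz_ineq_sum)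
  finally show ?thesis by (simp add: power_mult_distrib)
qed

lemma sum_abs_squared_le_weighted:
  fixes c z :: "'a \<Rightarrow> real"
  assumes c: "\<And>i. i \<in> I \<Longrightarrow> 0 < c i"
  shows "(\<Sum>i\<in>I. \<bar>z i\<bar>)\<^sup>2 \<le> (\<Sum>i\<in>I. c i) * (\<Sum>i\<in>I. (z i)\<^sup>2 / c i)"
proof -
  have "(\<Sum>i\<in>I. \<bar>z i\<bar>)\<^sup>2 = (\<Sum>i\<in>I. c i * (\<bar>z i\<bar> / c i))\<^sup>2"
    using c by (simp add: less_imp_neq[symmetric])
  also have "\<dots> \<le> (\<Sum>i\<in>I. \<bar>c i\<bar>) * (\<Sum>i\<in>I. \<bar>c i\<bar> * (\<bar>z i\<bar> / c i)\<^sup>2)"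
    by (rule sum_squared_le_sum_abs_mult)
  also have "\<dots> = (\<Sum>i\<in>I. c i) * (\<Sum>i\<in>I. (z i)\<^sup>2 / c i)"
    by (intro arg_cong2[where f = "(*)"] sum.cong) (auto dest!: c simp: power_divide power2_eq_square)
  finally show ?thesis .
qed

lemma simplex_nonneg: "p \<in> simplex n \<Longrightarrow> i < n \<Longrightarrow> 0 \<le> p i"
  by (simp add: simplex_def)

lemma simplex_sum: "p \<in> simplex n \<Longrightarrow> (\<Sum>i<n. p i) = 1"
  by (simp add: simplex_def)

lemma simplex_le_one:
  assumes "p \<in> simplex n" "i < n" shows "p i \<le> 1"
proof -
  have "p i \<le> (\<Sum>j<n. p j)"
    using assms by (intro member_le_sum) (auto simp: simplex_nonneg)
  then show ?thesis using simplex_sum[OF assms(1)] by simp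
qed

lemma sum_simplex_mult_const: "p \<in> simplex n \<Longrightarrow> (\<Sum>i<n. p i * c) = c"
  by (simp add: simplex_sum flip: sum_distrib_right)

lemma unif_in_simplex: "0 < n \<Longrightarrow> unif n \<in> simplex n"
  by (simp add: simplex_def unif_def)

lemma pinsker_inequality:
  assumes p: "p \<in> simplex n" and q: "q \<in> simplex n" and q_pos: "\<And>i. i < n \<Longrightarrow> 0 < q i"
  shows "(l1 n p q)\<^sup>2 / 2 \<le> DE n p q"
proof -
  define c where "c i = p i + 2 * q i" for i
  have c_pos: "0 < c i" if "i < n" for i
    using that simplex_nonneg[OF p] q_pos by (simp add: c_def add_nonneg_pos)
  have "(l1 n p q)\<^sup>2 \<le> (\<Sum>i<n. c i) * (\<Sum>i<n. (p i - q i)\<^sup>2 / c i)"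
    unfolding l1_def using c_pos by (intro sum_abs_squared_le_weighted) simp
  moreover have "(\<Sum>i<n. c i) = 3"
    using simplex_sum[OF p] simplex_sum[OF q] by (simp add: c_def sum.distrib flip: sum_distrib_left)
  moreover have "(\<Sum>i<n. 3 * (p i - q i)\<^sup>2 / (2 * c i)) = 3 * (\<Sum>i<n. (p i - q i)\<^sup>2 / c i) / 2"
    by (simp add: sum_distrib_left sum_divide_distrib ac_simps)
  ultimately have "(l1 n p q)\<^sup>2 / 2 \<le> (\<Sum>i<n. 3 * (p i - q i)\<^sup>2 / (2 * c i))"
    by simp
  also have "\<dots> \<le> (\<Sum>i<n. p i * ln (p i / q i) - p i + q i)"
    unfolding c_def
    by (intro sum_mono mult_ln_divide_quadratic_lower_bound) (auto simp: simplex_nonneg[OF p] q_pos)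
  also have "\<dots> = DE n p q"
    using simplex_sum[OF p] simplex_sum[OF q] by (simp add: DE_def sum.distrib sum_subtractf)
  finally show ?thesis .
qed

lemma DE_self: "DE n p p = 0"
  by (auto simp: DE_def intro!: sum.neutral)

lemma DE_nonneg:
  assumes "p \<in> simplex n" "q \<in> simplex n" "\<And>i. i < n \<Longrightarrow> 0 < q i"
  shows "0 \<le> DE n p q"
  using pinsker_inequality[OF assms] zero_le_power2[of "l1 n p q"] by linarith

lemma DE_unif_le_ln:
  assumes n: "0 < n" and q: "q \<in> simplex n"
  shows "DE n q (unif n) \<le> ln (real n)"
proof -
  have "DE n q (unif n) = (\<Sum>i<n. q i * ln (q i) + q i * ln (real n))"
  proof (unfold DE_def, rule sum.cong[OF refl])
    fix i assume "i \<in> {..<n}"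
    with n simplex_nonneg[OF q, of i]
    show "q i * ln (q i / unif n i) = q i * ln (q i) + q i * ln (real n)"
      by (cases "q i = 0") (simp_all add: unif_def ln_mult distrib_left)
  qed
  also have "\<dots> \<le> (\<Sum>i<n. q i * ln (real n))"
  proof (rule sum_mono)
    fix i assume "i \<in> {..<n}"
    then have "0 \<le> q i" "q i \<le> 1" using simplex_nonneg[OF q] simplex_le_one[OF q] by auto
    then have "q i * ln (q i) \<le> 0" by (cases "q i = 0") (auto intro: mult_nonneg_nonpos)
    then show "q i * ln (q i) + q i * ln (real n) \<le> q i * ln (real n)" by simp
  qed
  also have "\<dots> = ln (real n)"
    by (rule sum_simplex_mult_const[OF q])
  finally show ?thesis .
qed

definition gibbs :: "nat \<Rightarrow> real \<Rightarrow> (nat \<Rightarrow> real) \<Rightarrow> nat \<Rightarrow> real" where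
  "gibbs n \<eta> c = (\<lambda>i. if i < n then exp (- c i / \<eta>) / (\<Sum>j<n. exp (- c j / \<eta>)) else 0)"

definition entropic_objective :: "nat \<Rightarrow> real \<Rightarrow> (nat \<Rightarrow> real) \<Rightarrow> (nat \<Rightarrow> real) \<Rightarrow> real" where
  "entropic_objective n \<eta> c q = (\<Sum>i<n. c i * q i) + \<eta> * DE n q (unif n)"

lemma gibbs_partition_pos: "0 < (n::nat) \<Longrightarrow> 0 < (\<Sum>j<n. exp (- c j / \<eta>) :: real)"
  by (rule sum_pos) auto

lemma gibbs_pos: "0 < n \<Longrightarrow> i < n \<Longrightarrow> 0 < gibbs n \<eta> c i"
  using gibbs_partition_pos[of n c \<eta>] by (simp add: gibbs_def)

lemma gibbs_in_simplex:
  assumes "0 < n" shows "gibbs n \<eta> c \<in> simplex n"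
proof -
  have "(\<Sum>i<n. gibbs n \<eta> c i) = 1"
    using gibbs_partition_pos[OF assms, of c \<eta>] by (simp add: gibbs_def flip: sum_divide_distrib)
  then show ?thesis
    using gibbs_pos[OF assms] by (auto simp: simplex_def gibbs_def less_imp_le)
qed

lemma entropic_objective_eq_DE_gibbs:
  assumes n: "0 < n" and \<eta>: "0 < \<eta>" and q: "q \<in> simplex n"
  shows "entropic_objective n \<eta> c q
       = \<eta> * DE n q (gibbs n \<eta> c) + \<eta> * ln (real n) - \<eta> * ln (\<Sum>j<n. exp (- c j / \<eta>))"
proof -
  define Z where "Z = (\<Sum>j<n. exp (- c j / \<eta>))"
  define K where "K = \<eta> * ln (real n) - \<eta> * ln Z"
  have Z: "0 < Z" unfolding Z_def by (rule gibbs_partition_pos[OF n])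
  have "entropic_objective n \<eta> c q = (\<Sum>i<n. c i * q i + \<eta> * (q i * ln (q i / unif n i)))"
    by (simp add: entropic_objective_def DE_def sum.distrib sum_distrib_left)
  also have "\<dots> = (\<Sum>i<n. \<eta> * (q i * ln (q i / gibbs n \<eta> c i)) + q i * K)"
  proof (rule sum.cong[OF refl])
    fix i assume i: "i \<in> {..<n}"
    show "c i * q i + \<eta> * (q i * ln (q i / unif n i))
        = \<eta> * (q i * ln (q i / gibbs n \<eta> c i)) + q i * K"
    proof (cases "q i = 0")
      case False
      then have qi: "0 < q i" using simplex_nonneg[OF q, of i] i by simp
      have gibbs_i: "gibbs n \<eta> c i = exp (- c i / \<eta>) / Z"
        using i by (simp add: gibbs_def Z_def)
      have "ln (q i / unif n i) = ln (q i) + ln (real n)"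
        using i n qi by (simp add: unif_def ln_mult)
      moreover have "ln (q i / gibbs n \<eta> c i) = ln (q i) + c i / \<eta> + ln Z"
        using qi Z unfolding gibbs_i by (simp add: ln_div ln_mult)
      ultimately show ?thesis
        using \<eta> by (simp add: K_def algebra_simps)
    qed simp
  qed
  also have "\<dots> = \<eta> * DE n q (gibbs n \<eta> c) + K"
    by (simp add: DE_def sum.distrib sum_distrib_left sum_simplex_mult_const[OF q])
  finally show ?thesis unfolding K_def Z_def by simp
qed

lemma gibbs_minimizes_entropic_objective:
  assumes n: "0 < n" and \<eta>: "0 < \<eta>" and q: "q \<in> simplex n"
  shows "entropic_objective n \<eta> c (gibbs n \<eta> c) \<le> entropic_objective n \<eta> c q"
proof -
  have "0 \<le> DE n q (gibbs n \<eta> c)"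
    by (rule DE_nonneg[OF q gibbs_in_simplex[OF n] gibbs_pos[OF n]])
  then show ?thesis
    using \<eta> by (simp add: entropic_objective_eq_DE_gibbs[OF n \<eta>] q gibbs_in_simplex[OF n] DE_self)
qed

text \<open>Pinsker's inequality makes the entropic objective \<open>\<eta>\<close>-strongly convex with respect to
  the \<open>\<ell>\<^sub>1\<close>-norm; its minimizer is the Gibbs distribution.\<close>
lemma entropic_objective_strong_min:
  assumes n: "0 < n" and \<eta>: "0 < \<eta>" and x: "x \<in> simplex n" and y: "y \<in> simplex n"
    and min: "\<And>q. q \<in> simplex n \<Longrightarrow> entropic_objective n \<eta> c x \<le> entropic_objective n \<eta> c q"
  shows "entropic_objective n \<eta> c x + \<eta> / 2 * (l1 n y x)\<^sup>2 \<le> entropic_objective n \<eta> c y"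
proof -
  let ?s = "gibbs n \<eta> c"
  have s: "?s \<in> simplex n" "\<And>i. i < n \<Longrightarrow> 0 < ?s i"
    using gibbs_in_simplex[OF n] gibbs_pos[OF n] by auto
  have "\<eta> * DE n x ?s \<le> 0"
    using min[OF s(1)] by (simp add: entropic_objective_eq_DE_gibbs[OF n \<eta>] x s DE_self)
  then have "DE n x ?s \<le> 0"
    using \<eta> by (simp add: mult_le_0_iff)
  then have "(l1 n x ?s)\<^sup>2 \<le> 0"
    using pinsker_inequality[OF x s] by linarith
  then have "l1 n x ?s = 0"
    by simp
  then have "\<forall>i<n. x i = ?s i"
    unfolding l1_def by (subst (asm) sum_nonneg_eq_0_iff) auto
  then have "l1 n y x = l1 n y ?s" "DE n x ?s = 0"
    using DE_self[of n ?s] by (simp_all add: l1_def DE_def)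
  then show ?thesis
    using pinsker_inequality[OF y s] \<eta>
    by (simp add: entropic_objective_eq_DE_gibbs[OF n \<eta>] x y)
qed

section \<open>Optimistic follow-the-leader on quadratic losses\<close>

lemma ip_comm: "ip d u v = ip d v u"
  by (simp add: ip_def mult.commute)

lemma ip_cong_right: "(\<And>k. k < d \<Longrightarrow> u k = v k) \<Longrightarrow> ip d z u = ip d z v"
  by (simp add: ip_def)

lemma ip_scale_right: "ip d v (\<lambda>k. c * u k) = c * ip d v u"
  by (simp add: ip_def sum_distrib_left algebra_simps)

lemma ip_add_right: "ip d v (\<lambda>k. f k + g k) = ip d v f + ip d v g"
  by (simp add: ip_def sum.distrib algebra_simps)

lemma ip_divide_right: "ip d v (\<lambda>k. f k / c) = ip d v f / c"
  by (simp add: ip_def sum_divide_distrib)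

lemma ip_sum_right: "ip d v (\<lambda>k. \<Sum>t\<in>J. f t * w t k) = (\<Sum>t\<in>J. f t * ip d v (w t))"
proof -
  have "ip d v (\<lambda>k. \<Sum>t\<in>J. f t * w t k) = (\<Sum>k<d. \<Sum>t\<in>J. f t * (v k * w t k))"
    by (simp add: ip_def sum_distrib_left algebra_simps)
  also have "\<dots> = (\<Sum>t\<in>J. f t * ip d v (w t))"
    by (subst sum.swap) (simp add: ip_def sum_distrib_left)
  finally show ?thesis .
qed

lemma ip_self_nonneg: "0 \<le> ip d v v"
  by (simp add: ip_def sum_nonneg)

lemma nrm_square: "(nrm d v)\<^sup>2 = ip d v v"
  by (simp add: nrm_def ip_self_nonneg)

lemma ip_le_nrm_mult: "ip d u v \<le> nrm d u * nrm d v"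
proof -
  have "(ip d u v)\<^sup>2 \<le> ip d u u * ip d v v"
    unfolding ip_def using Cauchy_Schwarz_ineq_sum[of u v "{..<d}"] by (simp add: power2_eq_square)
  then have "\<bar>ip d u v\<bar> \<le> nrm d u * nrm d v"
    unfolding nrm_def by (metis real_sqrt_abs real_sqrt_le_mono real_sqrt_mult)
  then show ?thesis by simp
qed

definition qloss :: "nat \<Rightarrow> (nat \<Rightarrow> real) \<Rightarrow> (nat \<Rightarrow> real) \<Rightarrow> real" where
  "qloss d a u = ip d u u / 2 - ip d u a"

lemma qloss_eq_sum: "qloss d a u = (\<Sum>k<d. (u k)\<^sup>2 / 2 - u k * a k)"
  by (simp add: qloss_def ip_def sum_subtractf sum_divide_distrib power2_eq_square)

lemma sum_qloss:
  "(\<Sum>j\<in>J. c j * qloss d (a j) u) = (\<Sum>j\<in>J. c j) * ip d u u / 2 - ip d u (\<lambda>k. \<Sum>j\<in>J. c j * a j k)"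
  by (simp add: qloss_def ip_sum_right right_diff_distrib sum_subtractf sum_distrib_right)

lemma quadratic_completing_square:
  assumes S: "0 < S"
  shows "S * ip d u u / 2 - ip d u B = S / 2 * (\<Sum>k<d. (u k - B k / S)\<^sup>2) - ip d B B / (2 * S)"
proof -
  have "S / 2 * (\<Sum>k<d. (u k - B k / S)\<^sup>2)
      = (\<Sum>k<d. (S * (u k * u k) / 2 - u k * B k) + B k * B k / (2 * S))"
    unfolding sum_distrib_left
    by (rule sum.cong[OF refl]) (use S in \<open>simp add: field_simps power2_eq_square\<close>)
  also have "\<dots> = (S * ip d u u / 2 - ip d u B) + ip d B B / (2 * S)"
    unfolding sum.distrib by (simp add: ip_def sum_subtractf sum_distrib_left sum_divide_distrib)
  finally show ?thesis using S by (simp add: field_simps)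
qed

lemma quadratic_lower_bound:
  "0 < S \<Longrightarrow> - ip d B B / (2 * S) \<le> S * ip d u u / 2 - ip d u B"
  by (simp add: quadratic_completing_square sum_nonneg)

lemma quadratic_argmin_iff:
  assumes S: "0 < S"
  shows "(\<forall>u\<in>Rd d. S * ip d w w / 2 - ip d w B \<le> S * ip d u u / 2 - ip d u B)
     \<longleftrightarrow> (\<forall>k<d. w k = B k / S)"
proof
  assume min: "\<forall>u\<in>Rd d. S * ip d w w / 2 - ip d w B \<le> S * ip d u u / 2 - ip d u B"
  define m where "m k = (if k < d then B k / S else 0)" for k
  have "m \<in> Rd d" by (simp add: m_def Rd_def)
  with min have "S / 2 * (\<Sum>k<d. (w k - B k / S)\<^sup>2) \<le> S / 2 * (\<Sum>k<d. (m k - B k / S)\<^sup>2)"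
    by (simp add: quadratic_completing_square[OF S])
  then have "(\<Sum>k<d. (w k - B k / S)\<^sup>2) \<le> 0"
    using S by (simp add: m_def mult_le_0_iff)
  then have "(\<Sum>k<d. (w k - B k / S)\<^sup>2) = 0"
    by (intro antisym sum_nonneg) simp_all
  then have "\<forall>k\<in>{..<d}. (w k - B k / S)\<^sup>2 = 0"
    by (subst (asm) sum_nonneg_eq_0_iff) simp_all
  then show "\<forall>k<d. w k = B k / S" by simp
next
  assume "\<forall>k<d. w k = B k / S"
  then have "(\<Sum>k<d. (w k - B k / S)\<^sup>2) = 0"
    by (intro sum.neutral) simp
  then have "S * ip d w w / 2 - ip d w B = - ip d B B / (2 * S)"
    by (simp add: quadratic_completing_square[OF S])
  then show "\<forall>u\<in>Rd d. S * ip d w w / 2 - ip d w B \<le> S * ip d u u / 2 - ip d u B"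
    using quadratic_lower_bound[OF S] by simp
qed

definition tri :: "nat \<Rightarrow> real" where
  "tri m = real m * (real m + 1) / 2"

lemma sum_of_nat_eq_tri: "(\<Sum>j=1..m. real j) = tri m"
  by (induction m) (simp_all add: tri_def field_simps)

lemma tri_pos: "0 < m \<Longrightarrow> 0 < tri m"
  by (simp add: tri_def)

lemma tri_Suc: "tri (Suc m) = tri m + real (Suc m)"
  by (simp add: tri_def field_simps)

definition weighted_sum :: "(nat \<Rightarrow> nat \<Rightarrow> real) \<Rightarrow> nat \<Rightarrow> nat \<Rightarrow> real" where
  "weighted_sum a m = (\<lambda>k. \<Sum>j=1..m. real j * a j k)"

lemma weighted_sum_Suc: "weighted_sum a (Suc m) k = weighted_sum a m k + real (Suc m) * a (Suc m) k"
  by (simp add: weighted_sum_def)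

text \<open>Optimistic follow-the-leader against the losses \<open>t * qloss d (a t)\<close>: the unseen
  loss of round \<open>t\<close> is predicted by that of round \<open>t - 1\<close>.\<close>
definition oftl_iterate :: "nat \<Rightarrow> (nat \<Rightarrow> nat \<Rightarrow> real) \<Rightarrow> nat \<Rightarrow> nat \<Rightarrow> real" where
  "oftl_iterate d a t =
     (\<lambda>k. if k < d then (weighted_sum a (t - 1) k + real t * a (t - 1) k) / tri t else 0)"

lemma oftl_iterate_in_Rd: "oftl_iterate d a t \<in> Rd d"
  by (simp add: oftl_iterate_def Rd_def)

lemma oftl_objective_eq:
  assumes "1 \<le> t"
  shows "(\<Sum>j=1..t-1. real j * qloss d (a j) u) + real t * qloss d (a (t - 1)) u
       = tri t * ip d u u / 2 - ip d u (\<lambda>k. weighted_sum a (t - 1) k + real t * a (t - 1) k)"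
proof -
  have "tri t = tri (t - 1) + real t"
    using assms tri_Suc[of "t - 1"] by simp
  moreover have "(\<Sum>j=1..t-1. real j * qloss d (a j) u)
      = tri (t - 1) * ip d u u / 2 - ip d u (weighted_sum a (t - 1))"
    unfolding sum_qloss sum_of_nat_eq_tri weighted_sum_def ..
  ultimately show ?thesis
    by (simp add: qloss_def ip_add_right ip_scale_right algebra_simps)
qed

lemma oftl_argmin_iff:
  assumes "1 \<le> t"
  shows "(\<forall>u\<in>Rd d. (\<Sum>j=1..t-1. real j * qloss d (a j) w) + real t * qloss d (a (t - 1)) w
                 \<le> (\<Sum>j=1..t-1. real j * qloss d (a j) u) + real t * qloss d (a (t - 1)) u)
     \<longleftrightarrow> (\<forall>k<d. w k = oftl_iterate d a t k)"
proof -
  have "0 < tri t" using assms by (simp add: tri_pos)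
  then show ?thesis
    unfolding oftl_objective_eq[OF assms] by (simp add: quadratic_argmin_iff oftl_iterate_def)
qed

lemma oftl_step_scalar:
  fixes A a a' :: real
  assumes t: "1 \<le> t" and A: "t = 1 \<Longrightarrow> A = 0"
  defines "w \<equiv> (A + real t * a') / tri t"
  shows "real t * (w\<^sup>2 / 2 - w * a) \<le> A\<^sup>2 / (2 * tri (t - 1)) - (A + real t * a)\<^sup>2 / (2 * tri t) + (a - a')\<^sup>2"
proof -
  define S S' where "S = tri t" and "S' = tri (t - 1)"
  have S: "0 < S" using t by (simp add: S_def tri_pos)
  have S': "S' = S - real t" using t tri_Suc[of "t - 1"] by (simp add: S_def S'_def)
  have A_eq: "A = S * w - real t * a'" using S by (simp add: w_def S_def field_simps)
  have "real t * (w\<^sup>2 / 2 - w * a)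
      = (A * w - S' * w\<^sup>2 / 2) - (A + real t * a)\<^sup>2 / (2 * S) + (real t)\<^sup>2 / (2 * S) * (a - a')\<^sup>2"
    unfolding A_eq S' using S by (simp add: field_simps power2_eq_square)
  also have "A * w - S' * w\<^sup>2 / 2 \<le> A\<^sup>2 / (2 * S')"
  proof (cases "t = 1")
    case False
    with t have "0 < S'" by (simp add: S'_def tri_pos)
    then have "A\<^sup>2 / (2 * S') - (A * w - S' * w\<^sup>2 / 2) = (A - S' * w)\<^sup>2 / (2 * S')"
      by (simp add: field_simps power2_eq_square)
    moreover have "0 \<le> (A - S' * w)\<^sup>2 / (2 * S')" using \<open>0 < S'\<close> by simp
    ultimately show ?thesis by linarith
  qed (simp add: A S'_def tri_def)
  also have "(real t)\<^sup>2 / (2 * S) * (a - a')\<^sup>2 \<le> (a - a')\<^sup>2"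
    using S t by (intro mult_left_le_one_le) (simp_all add: S_def tri_def power2_eq_square)
  finally show ?thesis by (simp add: S_def S'_def)
qed

lemma oftl_step:
  assumes t: "1 \<le> t" and w: "\<forall>k<d. w k = oftl_iterate d a t k"
  shows "real t * qloss d (a t) w
     \<le> ip d (weighted_sum a (t - 1)) (weighted_sum a (t - 1)) / (2 * tri (t - 1))
       - ip d (weighted_sum a t) (weighted_sum a t) / (2 * tri t) + (nrm d (\<lambda>k. a t k - a (t - 1) k))\<^sup>2"
proof -
  have "real t * qloss d (a t) w = (\<Sum>k<d. real t * ((w k)\<^sup>2 / 2 - w k * a t k))"
    by (simp add: qloss_eq_sum sum_distrib_left)
  also have "\<dots> \<le> (\<Sum>k<d. (weighted_sum a (t - 1) k)\<^sup>2 / (2 * tri (t - 1))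
      - (weighted_sum a t k)\<^sup>2 / (2 * tri t) + (a t k - a (t - 1) k)\<^sup>2)"
  proof (rule sum_mono)
    fix k assume "k \<in> {..<d}"
    moreover have "weighted_sum a t k = weighted_sum a (t - 1) k + real t * a t k"
      using t weighted_sum_Suc[of a "t - 1" k] by simp
    moreover have "t = 1 \<Longrightarrow> weighted_sum a (t - 1) k = 0"
      by (simp add: weighted_sum_def)
    ultimately show "real t * ((w k)\<^sup>2 / 2 - w k * a t k)
        \<le> (weighted_sum a (t - 1) k)\<^sup>2 / (2 * tri (t - 1))
          - (weighted_sum a t k)\<^sup>2 / (2 * tri t) + (a t k - a (t - 1) k)\<^sup>2"
      using oftl_step_scalar[OF t] w by (simp add: oftl_iterate_def)
  qed
  also have "\<dots> = ip d (weighted_sum a (t - 1)) (weighted_sum a (t - 1)) / (2 * tri (t - 1))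
       - ip d (weighted_sum a t) (weighted_sum a t) / (2 * tri t) + (nrm d (\<lambda>k. a t k - a (t - 1) k))\<^sup>2"
    unfolding nrm_square by (simp add: ip_def sum.distrib sum_subtractf sum_divide_distrib power2_eq_square)
  finally show ?thesis .
qed

lemma oftl_telescope:
  assumes w: "\<forall>t\<in>{1..T}. \<forall>k<d. w t k = oftl_iterate d a t k" and "M \<le> T"
  shows "(\<Sum>t=1..M. real t * qloss d (a t) (w t))
     \<le> - ip d (weighted_sum a M) (weighted_sum a M) / (2 * tri M) + (\<Sum>t=1..M. (nrm d (\<lambda>k. a t k - a (t - 1) k))\<^sup>2)"
  using assms(2)
proof (induction M)
  case 0
  show ?case by (simp add: tri_def)
next
  case (Suc M)
  have "real (Suc M) * qloss d (a (Suc M)) (w (Suc M))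
     \<le> ip d (weighted_sum a M) (weighted_sum a M) / (2 * tri M)
       - ip d (weighted_sum a (Suc M)) (weighted_sum a (Suc M)) / (2 * tri (Suc M))
       + (nrm d (\<lambda>k. a (Suc M) k - a M k))\<^sup>2"
    using oftl_step[of "Suc M" d "w (Suc M)" a] w Suc.prems by simp
  with Suc show ?case by simp
qed

lemma oftl_regret:
  assumes w: "\<forall>t\<in>{1..T}. \<forall>k<d. w t k = oftl_iterate d a t k"
  shows "(\<Sum>t=1..T. real t * qloss d (a t) (w t))
     \<le> (\<Sum>t=1..T. real t * qloss d (a t) u) + (\<Sum>t=1..T. (nrm d (\<lambda>k. a t k - a (t - 1) k))\<^sup>2)"
proof (cases "T = 0")
  case False
  have "- ip d (weighted_sum a T) (weighted_sum a T) / (2 * tri T)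
      \<le> tri T * ip d u u / 2 - ip d u (weighted_sum a T)"
    using False by (intro quadratic_lower_bound tri_pos) simp
  also have "\<dots> = (\<Sum>t=1..T. real t * qloss d (a t) u)"
    unfolding sum_qloss sum_of_nat_eq_tri weighted_sum_def ..
  finally show ?thesis
    using oftl_telescope[OF w order.refl] by linarith
qed simp

lemma oftl_iterate_ip_ge:
  assumes t: "1 \<le> t" and a: "\<And>j. j < t \<Longrightarrow> \<gamma> \<le> ip d v (a j)"
  shows "\<gamma> \<le> ip d v (oftl_iterate d a t)"
proof -
  have "ip d v (oftl_iterate d a t)
      = ip d v (\<lambda>k. (weighted_sum a (t - 1) k + real t * a (t - 1) k) / tri t)"
    by (rule ip_cong_right) (simp add: oftl_iterate_def)
  also have "\<dots> = (ip d v (weighted_sum a (t - 1)) + real t * ip d v (a (t - 1))) / tri t"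
    unfolding ip_divide_right ip_add_right ip_scale_right ..
  finally have "ip d v (oftl_iterate d a t)
      = (ip d v (weighted_sum a (t - 1)) + real t * ip d v (a (t - 1))) / tri t" .
  moreover have "tri (t - 1) * \<gamma> \<le> ip d v (weighted_sum a (t - 1))"
  proof -
    have "tri (t - 1) * \<gamma> = (\<Sum>j=1..t-1. real j * \<gamma>)"
      unfolding sum_distrib_right[symmetric] sum_of_nat_eq_tri ..
    also have "\<dots> \<le> (\<Sum>j=1..t-1. real j * ip d v (a j))"
      using a by (intro sum_mono mult_left_mono) auto
    finally show ?thesis unfolding weighted_sum_def ip_sum_right .
  qed
  moreover have "real t * \<gamma> \<le> real t * ip d v (a (t - 1))"
    using a t by (intro mult_left_mono) auto
  moreover have "tri t = tri (t - 1) + real t"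
    using t tri_Suc[of "t - 1"] by simp
  moreover have "0 < tri t"
    using t by (simp add: tri_pos)
  ultimately show ?thesis by (simp add: le_divide_eq algebra_simps)
qed

section \<open>Regret and margin of the game dynamics\<close>

lemma pAw_eq_ip: "pAw n d x y p w = ip d w (Atp n x y p)"
proof -
  have "pAw n d x y p w = (\<Sum>i<n. \<Sum>k<d. w k * (p i * y i * x i k))"
    by (simp add: pAw_def ip_def sum_distrib_left algebra_simps)
  also have "\<dots> = ip d w (Atp n x y p)"
    by (subst sum.swap) (simp add: ip_def Atp_def sum_distrib_left)
  finally show ?thesis .
qed

lemma hloss_eq_qloss: "hloss n d x y p j u = qloss d (Atp n x y (p j)) u"
  by (simp add: hloss_def gpay_def qloss_def pAw_eq_ip nrm_square)

lemma hloss_eq_uminus_lloss: "hloss n d x y p t (w t) = - lloss n d x y w t (p t)"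
  by (simp add: hloss_def lloss_def)

lemma lloss_eq: "lloss n d x y w s q = (\<Sum>i<n. y i * ip d (x i) (w s) * q i) - ip d (w s) (w s) / 2"
  by (simp add: lloss_def gpay_def pAw_def nrm_square mult.commute)

lemma data_okD:
  assumes "data_ok n d x y \<gamma>"
  shows "0 < n" "0 < \<gamma>" "\<And>i. i < n \<Longrightarrow> nrm d (x i) \<le> 1" "\<And>i. i < n \<Longrightarrow> \<bar>y i\<bar> = 1"
    "\<exists>ws\<in>Rd d. nrm d ws = 1 \<and> margin n d x y ws = \<gamma>"
  using assms unfolding data_ok_def by auto

lemma Atp_lipschitz:
  assumes x: "\<And>i. i < n \<Longrightarrow> nrm d (x i) \<le> 1" and y: "\<And>i. i < n \<Longrightarrow> \<bar>y i\<bar> \<le> 1"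
  shows "nrm d (\<lambda>k. Atp n x y q k - Atp n x y q' k) \<le> l1 n q q'"
proof (rule power2_le_imp_le)
  let ?c = "\<lambda>i. q i - q' i"
  have x2: "(\<Sum>k<d. (x i k)\<^sup>2) \<le> 1" if "i < n" for i
    using x[OF that] power_mono[OF x[OF that], of 2]
    by (simp add: nrm_square ip_def power2_eq_square nrm_def)
  have "(nrm d (\<lambda>k. Atp n x y q k - Atp n x y q' k))\<^sup>2 = (\<Sum>k<d. (\<Sum>i<n. ?c i * (y i * x i k))\<^sup>2)"
    unfolding nrm_square ip_def Atp_def
    by (simp add: power2_eq_square sum_subtractf[symmetric] algebra_simps)
  also have "\<dots> \<le> (\<Sum>k<d. (\<Sum>i<n. \<bar>?c i\<bar>) * (\<Sum>i<n. \<bar>?c i\<bar> * (y i * x i k)\<^sup>2))"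
    by (intro sum_mono sum_squared_le_sum_abs_mult)
  also have "\<dots> = (\<Sum>i<n. \<bar>?c i\<bar>) * (\<Sum>i<n. \<bar>?c i\<bar> * ((y i)\<^sup>2 * (\<Sum>k<d. (x i k)\<^sup>2)))"
    by (simp add: sum_distrib_left power_mult_distrib sum.swap[of _ "{..<d}"] algebra_simps)
  also have "\<dots> \<le> (\<Sum>i<n. \<bar>?c i\<bar>) * (\<Sum>i<n. \<bar>?c i\<bar> * 1)"
  proof (intro mult_left_mono sum_nonneg)
    show "(\<Sum>i<n. \<bar>?c i\<bar> * ((y i)\<^sup>2 * (\<Sum>k<d. (x i k)\<^sup>2))) \<le> (\<Sum>i<n. \<bar>?c i\<bar> * 1)"
    proof (rule sum_mono)
      fix i assume "i \<in> {..<n}"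
      then have "(y i)\<^sup>2 \<le> 1" "(\<Sum>k<d. (x i k)\<^sup>2) \<le> 1"
        using y x2 by (auto simp: abs_square_le_1)
      then show "\<bar>?c i\<bar> * ((y i)\<^sup>2 * (\<Sum>k<d. (x i k)\<^sup>2)) \<le> \<bar>?c i\<bar> * 1"
        by (intro mult_left_mono mult_le_one) (simp_all add: sum_nonneg)
    qed
  qed simp
  finally show "(nrm d (\<lambda>k. Atp n x y q k - Atp n x y q' k))\<^sup>2 \<le> (l1 n q q')\<^sup>2"
    by (simp add: l1_def power2_eq_square)
qed (simp add: l1_def sum_nonneg)

lemma game_dyn_w_eq_oftl_iterate:
  assumes "game_dyn n d x y T w p" "t \<in> {1..T}" "k < d"
  shows "w t k = oftl_iterate d (\<lambda>j. Atp n x y (p j)) t k"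
  using assms oftl_argmin_iff[where t = t and d = d and w = "w t" and a = "\<lambda>j. Atp n x y (p j)"]
  by (simp add: game_dyn_def hloss_eq_qloss)

lemma game_dyn_w_regret_bound:
  assumes D: "data_ok n d x y \<gamma>" and g: "game_dyn n d x y T w p"
  shows "(\<Sum>t=1..T. real t * hloss n d x y p t (w t))
     \<le> (\<Sum>t=1..T. real t * hloss n d x y p t u) + (\<Sum>t=1..T. (l1 n (p t) (p (t - 1)))\<^sup>2)"
proof -
  let ?a = "\<lambda>j. Atp n x y (p j)"
  have "(\<Sum>t=1..T. real t * qloss d (?a t) (w t))
      \<le> (\<Sum>t=1..T. real t * qloss d (?a t) u) + (\<Sum>t=1..T. (nrm d (\<lambda>k. ?a t k - ?a (t - 1) k))\<^sup>2)"
    using game_dyn_w_eq_oftl_iterate[OF g] by (intro oftl_regret) blast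
  moreover have "(\<Sum>t=1..T. (nrm d (\<lambda>k. ?a t k - ?a (t - 1) k))\<^sup>2) \<le> (\<Sum>t=1..T. (l1 n (p t) (p (t - 1)))\<^sup>2)"
    using data_okD(3,4)[OF D]
    by (intro sum_mono power_mono Atp_lipschitz) (simp_all add: nrm_def ip_self_nonneg)
  ultimately show ?thesis by (simp add: hloss_eq_qloss)
qed

text \<open>Four times the objective minimized by the distribution player in \<^const>\<open>game_dyn\<close>.\<close>
definition ftrl_objective ::
    "nat \<Rightarrow> nat \<Rightarrow> (nat \<Rightarrow> nat \<Rightarrow> real) \<Rightarrow> (nat \<Rightarrow> real) \<Rightarrow> (nat \<Rightarrow> nat \<Rightarrow> real) \<Rightarrow> nat \<Rightarrow> (nat \<Rightarrow> real) \<Rightarrow> real"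
  where
  "ftrl_objective n d x y w m q = (\<Sum>s=1..m. real s * lloss n d x y w s q) + 4 * DE n q (unif n)"

lemma ftrl_objective_eq_entropic_objective:
  "ftrl_objective n d x y w m q
   = entropic_objective n 4 (\<lambda>i. \<Sum>s=1..m. real s * (y i * ip d (x i) (w s))) q
     - (\<Sum>s=1..m. real s * ip d (w s) (w s)) / 2"
proof -
  have "(\<Sum>s=1..m. real s * lloss n d x y w s q)
      = (\<Sum>s=1..m. \<Sum>i<n. real s * (y i * ip d (x i) (w s)) * q i)
        - (\<Sum>s=1..m. real s * ip d (w s) (w s)) / 2"
    by (simp add: lloss_eq right_diff_distrib sum_subtractf sum_distrib_left sum_divide_distrib
        mult.assoc)
  also have "(\<Sum>s=1..m. \<Sum>i<n. real s * (y i * ip d (x i) (w s)) * q i)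
      = (\<Sum>i<n. (\<Sum>s=1..m. real s * (y i * ip d (x i) (w s))) * q i)"
    by (subst sum.swap) (simp add: sum_distrib_right)
  finally show ?thesis
    by (simp add: ftrl_objective_def entropic_objective_def)
qed

lemma game_dyn_p_in_simplex:
  "game_dyn n d x y T w p \<Longrightarrow> 0 < n \<Longrightarrow> m \<le> T \<Longrightarrow> p m \<in> simplex n"
  by (cases "m = 0") (auto simp: game_dyn_def unif_in_simplex)

lemma game_dyn_p_strong_min:
  assumes g: "game_dyn n d x y T w p" and n: "0 < n" and m: "m \<le> T" and q: "q \<in> simplex n"
  shows "ftrl_objective n d x y w m (p m) + 2 * (l1 n q (p m))\<^sup>2 \<le> ftrl_objective n d x y w m q"
proof -
  let ?c = "\<lambda>i. \<Sum>s=1..m. real s * (y i * ip d (x i) (w s))"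
  have "entropic_objective n 4 ?c (p m) \<le> entropic_objective n 4 ?c q'" if q': "q' \<in> simplex n" for q'
  proof (cases "m = 0")
    case True
    then show ?thesis
      using g DE_nonneg[OF q' unif_in_simplex[OF n]]
      by (simp add: game_dyn_def entropic_objective_def DE_self unif_def)
  next
    case False
    with g m q' have "1/4 * (\<Sum>s=1..m. real s * lloss n d x y w s (p m)) + DE n (p m) (unif n)
        \<le> 1/4 * (\<Sum>s=1..m. real s * lloss n d x y w s q') + DE n q' (unif n)"
      unfolding game_dyn_def by auto
    then have "ftrl_objective n d x y w m (p m) \<le> ftrl_objective n d x y w m q'"
      by (simp add: ftrl_objective_def)
    then show ?thesis
      by (simp add: ftrl_objective_eq_entropic_objective)
  qed
  then have "entropic_objective n 4 ?c (p m) + 4 / 2 * (l1 n q (p m))\<^sup>2 \<le> entropic_objective n 4 ?c q"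
    by (intro entropic_objective_strong_min n game_dyn_p_in_simplex[OF g n m] q) simp_all
  then show ?thesis by (simp add: ftrl_objective_eq_entropic_objective)
qed

lemma game_dyn_p_telescope:
  assumes g: "game_dyn n d x y T w p" and n: "0 < n" and "M \<le> T"
  shows "(\<Sum>t=1..M. real t * lloss n d x y w t (p t)) + 2 * (\<Sum>t=1..M. (l1 n (p t) (p (t - 1)))\<^sup>2)
     \<le> ftrl_objective n d x y w M (p M)"
  using assms(3)
proof (induction M)
  case 0
  then show ?case using g by (simp add: game_dyn_def ftrl_objective_def DE_self)
next
  case (Suc M)
  have "ftrl_objective n d x y w M (p M) + 2 * (l1 n (p (Suc M)) (p M))\<^sup>2
      \<le> ftrl_objective n d x y w M (p (Suc M))"
    using Suc.prems by (intro game_dyn_p_strong_min[OF g n] game_dyn_p_in_simplex[OF g n]) simp_all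
  with Suc show ?case by (simp add: ftrl_objective_def)
qed

lemma game_dyn_p_regret_bound:
  assumes g: "game_dyn n d x y T w p" and n: "0 < n" and q: "q \<in> simplex n"
  shows "(\<Sum>t=1..T. real t * lloss n d x y w t (p t)) + 2 * (\<Sum>t=1..T. (l1 n (p t) (p (t - 1)))\<^sup>2)
     \<le> (\<Sum>t=1..T. real t * lloss n d x y w t q) + 4 * ln (real n)"
proof -
  have "ftrl_objective n d x y w T (p T) \<le> ftrl_objective n d x y w T q"
    using game_dyn_p_strong_min[OF g n order.refl q] zero_le_power2[of "l1 n q (p T)"] by linarith
  also have "\<dots> \<le> (\<Sum>t=1..T. real t * lloss n d x y w t q) + 4 * ln (real n)"
    using DE_unif_le_ln[OF n q] by (simp add: ftrl_objective_def)
  finally show ?thesis using game_dyn_p_telescope[OF g n order.refl] by linarith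
qed

lemma regret_w_le:
  assumes "data_ok n d x y \<gamma>" "game_dyn n d x y T w p"
  shows "regret_w n d x y T w p \<le> 2 * (\<Sum>t=1..T. (l1 n (p t) (p (t - 1)))\<^sup>2)"
proof -
  let ?L = "\<Sum>t=1..T. (l1 n (p t) (p (t - 1)))\<^sup>2"
  have "(\<Sum>t=1..T. real t * hloss n d x y p t (w t)) - ?L \<le> (INF u\<in>Rd d. \<Sum>t=1..T. real t * hloss n d x y p t u)"
    using game_dyn_w_regret_bound[OF assms] by (intro cINF_greatest) (auto simp: Rd_def diff_le_eq)
  moreover have "0 \<le> ?L" by (simp add: sum_nonneg)
  ultimately show ?thesis by (simp add: regret_w_def)
qed

lemma regret_p_le:
  assumes "game_dyn n d x y T w p" "0 < n"
  shows "regret_p n d x y T w p \<le> 4 * ln (real n) - 2 * (\<Sum>t=1..T. (l1 n (p t) (p (t - 1)))\<^sup>2)"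
proof -
  have "(\<Sum>t=1..T. real t * lloss n d x y w t (p t)) + 2 * (\<Sum>t=1..T. (l1 n (p t) (p (t - 1)))\<^sup>2)
      - 4 * ln (real n) \<le> (INF q\<in>simplex n. \<Sum>t=1..T. real t * lloss n d x y w t q)"
    using game_dyn_p_regret_bound[OF assms] unif_in_simplex[OF assms(2)]
    by (intro cINF_greatest) (auto simp: diff_le_eq)
  then show ?thesis by (simp add: regret_p_def)
qed

lemma margin_le: "i < n \<Longrightarrow> margin n d x y v \<le> y i * ip d (x i) v"
  unfolding margin_def by (rule Min_le) auto

lemma le_margin_iff: "0 < n \<Longrightarrow> c \<le> margin n d x y v \<longleftrightarrow> (\<forall>i<n. c \<le> y i * ip d (x i) v)"
  unfolding margin_def by (subst Min_ge_iff) auto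

lemma margin_scale:
  assumes "0 < n" "0 \<le> c"
  shows "margin n d x y (\<lambda>k. c * v k) = c * margin n d x y v"
proof -
  have "c * margin n d x y v = Min ((*) c ` (\<lambda>i. y i * ip d (x i) v) ` {..<n})"
    unfolding margin_def using assms by (intro mono_Min_commute) (auto intro: mono_mult)
  then show ?thesis
    by (simp add: margin_def image_image ip_scale_right mult.left_commute)
qed

lemma margin_le_pAw:
  assumes q: "q \<in> simplex n" shows "margin n d x y v \<le> pAw n d x y q v"
proof -
  have "margin n d x y v = (\<Sum>i<n. q i * margin n d x y v)"
    by (simp add: sum_simplex_mult_const[OF q] mult.commute)
  also have "\<dots> \<le> pAw n d x y q v"
    unfolding pAw_def using simplex_nonneg[OF q]
    by (intro sum_mono mult_left_mono margin_le) auto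
  finally show ?thesis .
qed

lemma nmargin_scale:
  assumes n: "0 < n" and c: "0 < c" and v: "\<And>k. k < d \<Longrightarrow> v k = c * u k"
  shows "nmargin n d x y v = nmargin n d x y u"
proof -
  have ip_v: "ip d z v = c * ip d z u" for z
    using v by (simp add: ip_cong_right[of d v "\<lambda>k. c * u k"] ip_scale_right)
  have "margin n d x y v = c * margin n d x y u"
    using margin_scale[OF n less_imp_le[OF c]] by (simp add: margin_def ip_v ip_scale_right)
  moreover have "nrm d v = c * nrm d u"
    using c by (simp add: nrm_def ip_v ip_comm[of d v] real_sqrt_mult mult.assoc[symmetric])
  ultimately show ?thesis using c by (simp add: nmargin_def)
qed

lemma wbar_eq: "wbar T w = (\<lambda>k. (\<Sum>t=1..T. real t * w t k) / tri T)"
  unfolding wbar_def sum_of_nat_eq_tri ..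

lemma ip_wbar_right: "ip d v (wbar T w) = (\<Sum>t=1..T. real t * ip d v (w t)) / tri T"
  unfolding wbar_eq ip_divide_right ip_sum_right ..

lemma ip_wbar_right_ge:
  assumes "1 \<le> T" "\<And>t. t \<in> {1..T} \<Longrightarrow> \<gamma> \<le> ip d v (w t)"
  shows "\<gamma> \<le> ip d v (wbar T w)"
proof -
  have "tri T * \<gamma> = (\<Sum>t=1..T. real t * \<gamma>)"
    unfolding sum_distrib_right[symmetric] sum_of_nat_eq_tri ..
  also have "\<dots> \<le> (\<Sum>t=1..T. real t * ip d v (w t))"
    using assms(2) by (intro sum_mono mult_left_mono) auto
  finally show ?thesis
    using tri_pos[of T] assms(1) by (simp add: ip_wbar_right le_divide_eq mult.commute)
qed

lemma tri_mult_ip_wbar_le: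
  assumes "1 \<le> T"
  shows "tri T * ip d (wbar T w) (wbar T w) \<le> (\<Sum>t=1..T. real t * ip d (w t) (w t))"
proof -
  have S: "0 < tri T" using assms by (simp add: tri_pos)
  have "tri T * ip d (wbar T w) (wbar T w) = (\<Sum>k<d. (\<Sum>t=1..T. real t * w t k)\<^sup>2 / tri T)"
    using S by (simp add: ip_def wbar_eq sum_distrib_left power2_eq_square)
  also have "\<dots> \<le> (\<Sum>k<d. \<Sum>t=1..T. real t * (w t k)\<^sup>2)"
  proof (rule sum_mono)
    fix k
    have "(\<Sum>t=1..T. real t * w t k)\<^sup>2 \<le> tri T * (\<Sum>t=1..T. real t * (w t k)\<^sup>2)"
      using sum_squared_le_sum_abs_mult[of "\<lambda>t. real t" "\<lambda>t. w t k" "{1..T}"]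
      unfolding sum_of_nat_eq_tri[symmetric] by simp
    then show "(\<Sum>t=1..T. real t * w t k)\<^sup>2 / tri T \<le> (\<Sum>t=1..T. real t * (w t k)\<^sup>2)"
      using S by (simp add: divide_le_eq mult.commute)
  qed
  also have "\<dots> = (\<Sum>t=1..T. real t * ip d (w t) (w t))"
    by (subst sum.swap) (simp add: ip_def sum_distrib_left power2_eq_square)
  finally show ?thesis .
qed

lemma hloss_scaled_max_margin_le:
  assumes p: "p t \<in> simplex n" and ws: "nrm d ws = 1" "margin n d x y ws = \<gamma>" and \<gamma>: "0 \<le> \<gamma>"
  shows "hloss n d x y p t (\<lambda>k. \<gamma> * ws k) \<le> - (\<gamma>\<^sup>2 / 2)"
proof -
  have "pAw n d x y (p t) (\<lambda>k. \<gamma> * ws k) = \<gamma> * pAw n d x y (p t) ws"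
    by (simp add: pAw_def ip_scale_right sum_distrib_left algebra_simps)
  moreover have "(nrm d (\<lambda>k. \<gamma> * ws k))\<^sup>2 = \<gamma>\<^sup>2 * (nrm d ws)\<^sup>2"
    unfolding nrm_square by (simp add: ip_def sum_distrib_left power2_eq_square algebra_simps)
  moreover have "\<gamma> * \<gamma> \<le> \<gamma> * pAw n d x y (p t) ws"
    using margin_le_pAw[OF p] ws(2) \<gamma> by (intro mult_left_mono) auto
  ultimately show ?thesis
    using ws(1) by (simp add: hloss_def gpay_def power2_eq_square)
qed

lemma sum_lloss_point_mass:
  assumes "i < n" "1 \<le> T"
  shows "(\<Sum>t=1..T. real t * lloss n d x y w t (\<lambda>j. if j = i then 1 else 0))
       = tri T * (y i * ip d (x i) (wbar T w)) - (\<Sum>t=1..T. real t * ip d (w t) (w t)) / 2"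
  using assms tri_pos[of T]
  by (simp add: lloss_eq if_distrib sum.If_cases ip_wbar_right sum_subtractf sum_distrib_left
      sum_divide_distrib algebra_simps)

lemma game_dyn_margin_lower_bound:
  assumes D: "data_ok n d x y \<gamma>" and T: "1 \<le> T" and g: "game_dyn n d x y T w p" and i: "i < n"
  shows "\<gamma>\<^sup>2 / 2 + ip d (wbar T w) (wbar T w) / 2 - 4 * ln (real n) / tri T
     \<le> y i * ip d (x i) (wbar T w)"
proof -
  have n: "0 < n" and \<gamma>: "0 < \<gamma>" using data_okD[OF D] by simp_all
  obtain ws where ws: "nrm d ws = 1" "margin n d x y ws = \<gamma>" using data_okD(5)[OF D] by blast
  let ?L = "\<Sum>t=1..T. (l1 n (p t) (p (t - 1)))\<^sup>2"
  let ?e = "\<lambda>j. if j = i then 1 else 0 :: real"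
  have "(\<Sum>t=1..T. real t * hloss n d x y p t (\<lambda>k. \<gamma> * ws k)) \<le> (\<Sum>t=1..T. real t * - (\<gamma>\<^sup>2 / 2))"
    using game_dyn_p_in_simplex[OF g n] ws \<gamma>
    by (intro sum_mono mult_left_mono hloss_scaled_max_margin_le) auto
  also have "\<dots> = - tri T * \<gamma>\<^sup>2 / 2"
    unfolding sum_distrib_right[symmetric] sum_of_nat_eq_tri by simp
  finally have w_side: "- (\<Sum>t=1..T. real t * lloss n d x y w t (p t)) \<le> - tri T * \<gamma>\<^sup>2 / 2 + ?L"
    using game_dyn_w_regret_bound[OF D g, of "\<lambda>k. \<gamma> * ws k"]
    by (simp add: hloss_eq_uminus_lloss sum_negf)
  have "?e \<in> simplex n" using i by (simp add: simplex_def)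
  from game_dyn_p_regret_bound[OF g n this] have p_side:
    "(\<Sum>t=1..T. real t * lloss n d x y w t (p t)) + 2 * ?L
      \<le> tri T * (y i * ip d (x i) (wbar T w)) - tri T * ip d (wbar T w) (wbar T w) / 2 + 4 * ln (real n)"
    using sum_lloss_point_mass[OF i T, of d x y w] tri_mult_ip_wbar_le[OF T, of d w] by linarith
  have "0 \<le> ?L" by (simp add: sum_nonneg)
  with w_side p_side have "tri T * (\<gamma>\<^sup>2 / 2 + ip d (wbar T w) (wbar T w) / 2)
      \<le> tri T * (y i * ip d (x i) (wbar T w)) + 4 * ln (real n)"
    by (simp add: algebra_simps)
  then show ?thesis
    using tri_pos[of T] T by (simp add: field_simps)
qed

lemma game_dyn_margin_nonneg:
  assumes D: "data_ok n d x y \<gamma>" and T: "1 \<le> T" and g: "game_dyn n d x y T w p"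
    and T_ge: "4 * sqrt (ln (real n)) / \<gamma> \<le> real T"
  shows "0 \<le> margin n d x y (wbar T w)"
proof -
  have n: "0 < n" and \<gamma>: "0 < \<gamma>" using data_okD[OF D] by simp_all
  have ln_n: "0 \<le> ln (real n)" using n by simp
  have S: "0 < tri T" using T by (simp add: tri_pos)
  have "(4 * sqrt (ln (real n)))\<^sup>2 \<le> (real T * \<gamma>)\<^sup>2"
    using T_ge \<gamma> ln_n by (intro power_mono) (simp_all add: divide_le_eq)
  then have "16 * ln (real n) \<le> (real T)\<^sup>2 * \<gamma>\<^sup>2"
    using ln_n by (simp add: power_mult_distrib)
  also have "\<dots> \<le> 2 * tri T * \<gamma>\<^sup>2"
    by (intro mult_right_mono) (simp_all add: tri_def power2_eq_square algebra_simps)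
  finally have "4 * ln (real n) / tri T \<le> \<gamma>\<^sup>2 / 2"
    using S by (simp add: divide_le_eq mult.commute)
  then show ?thesis
    using n game_dyn_margin_lower_bound[OF D T g] ip_self_nonneg[of d "wbar T w"]
    by (force simp: le_margin_iff)
qed

lemma game_dyn_ip_w_ge:
  assumes g: "game_dyn n d x y T w p" and n: "0 < n" and ws: "margin n d x y ws = \<gamma>"
    and t: "t \<in> {1..T}"
  shows "\<gamma> \<le> ip d ws (w t)"
proof -
  have "\<gamma> \<le> ip d ws (Atp n x y (p j))" if "j < t" for j
    using margin_le_pAw[OF game_dyn_p_in_simplex[OF g n, of j], where d = d and x = x and y = y and v = ws]
      that t ws
    by (simp add: pAw_eq_ip)
  then have "\<gamma> \<le> ip d ws (oftl_iterate d (\<lambda>j. Atp n x y (p j)) t)"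
    using t by (intro oftl_iterate_ip_ge) auto
  then show ?thesis
    using game_dyn_w_eq_oftl_iterate[OF g t] by (simp add: ip_cong_right[of d "w t"])
qed

lemma game_dyn_nmargin_lower_bound:
  assumes D: "data_ok n d x y \<gamma>" and T: "1 \<le> T" and g: "game_dyn n d x y T w p"
  shows "\<gamma> - 4 * ln (real n) / (\<gamma> * tri T) \<le> nmargin n d x y (wbar T w)"
proof -
  have n: "0 < n" and \<gamma>: "0 < \<gamma>" using data_okD[OF D] by simp_all
  obtain ws where ws: "nrm d ws = 1" "margin n d x y ws = \<gamma>" using data_okD(5)[OF D] by blast
  define N where "N = nrm d (wbar T w)"
  define X where "X = 4 * ln (real n) / tri T"
  have "\<gamma> \<le> ip d ws (w t)" if "t \<in> {1..T}" for t
    using game_dyn_ip_w_ge[OF g n ws(2) that] .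
  then have "\<gamma> \<le> ip d ws (wbar T w)"
    by (rule ip_wbar_right_ge[OF T])
  then have \<gamma>_N: "\<gamma> \<le> N"
    using ip_le_nrm_mult[of d ws "wbar T w"] ws(1) by (simp add: N_def)
  have X: "0 \<le> X" using n T tri_pos[of T] by (simp add: X_def)
  have "N * (\<gamma> - X / \<gamma>) \<le> y i * ip d (x i) (wbar T w)" if "i < n" for i
  proof -
    have "\<gamma> * N \<le> \<gamma>\<^sup>2 / 2 + N\<^sup>2 / 2"
      using zero_le_power2[of "\<gamma> - N"] by (simp add: power2_eq_square algebra_simps)
    moreover have "X \<le> N * (X / \<gamma>)"
      using mult_left_mono[OF \<gamma>_N X] \<gamma> by (simp add: le_divide_eq mult.commute)
    moreover have "\<gamma>\<^sup>2 / 2 + N\<^sup>2 / 2 - X \<le> y i * ip d (x i) (wbar T w)"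
      using game_dyn_margin_lower_bound[OF D T g that] by (simp add: N_def X_def nrm_square)
    moreover have "N * (\<gamma> - X / \<gamma>) = \<gamma> * N - N * (X / \<gamma>)"
      by (simp add: algebra_simps)
    ultimately show ?thesis by linarith
  qed
  then have "N * (\<gamma> - X / \<gamma>) \<le> margin n d x y (wbar T w)"
    by (simp add: le_margin_iff[OF n])
  then show ?thesis
    using \<gamma>_N \<gamma> by (simp add: nmargin_def N_def[symmetric] X_def le_divide_eq mult.commute)
qed

section \<open>The Accelerated Perceptron as game dynamics\<close>

definition accp_q :: "nat \<Rightarrow> nat \<Rightarrow> (nat \<Rightarrow> nat \<Rightarrow> real) \<Rightarrow> (nat \<Rightarrow> real) \<Rightarrow> nat \<Rightarrow> nat \<Rightarrow> real" where
  "accp_q n d x y t = fst (snd (accp n d x y t))"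

definition accp_g :: "nat \<Rightarrow> nat \<Rightarrow> (nat \<Rightarrow> nat \<Rightarrow> real) \<Rightarrow> (nat \<Rightarrow> real) \<Rightarrow> nat \<Rightarrow> nat \<Rightarrow> real" where
  "accp_g n d x y t = snd (snd (accp n d x y t))"

lemma accp_Suc:
  fixes t :: nat
  defines "s \<equiv> real (Suc t)"
  shows "vT n d x y (Suc t) = (\<lambda>k. vT n d x y t k
           - s / (2 * (s + 1)) * (accp_g n d x y t k - Atp n x y (accp_q n d x y t) k))" (is ?v)
    and "accp_q n d x y (Suc t) = (\<lambda>i. if i < n
           then exp (- y i * ip d (vT n d x y (Suc t)) (x i))
             / (\<Sum>j<n. exp (- y j * ip d (vT n d x y (Suc t)) (x j)))
           else 0)" (is ?q)
    and "accp_g n d x y (Suc t)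
           = (\<lambda>k. s / (s + 1) * (accp_g n d x y t k - Atp n x y (accp_q n d x y (Suc t)) k))" (is ?g)
proof -
  obtain v q g where e: "accp n d x y t = (v, q, g)"
    by (cases "accp n d x y t")
  then have "vT n d x y t = v" "accp_q n d x y t = q" "accp_g n d x y t = g"
    by (simp_all add: vT_def accp_q_def accp_g_def)
  moreover have "accp n d x y (Suc t) =
     (let v' = (\<lambda>k. v k - s / (2 * (s + 1)) * (g k - Atp n x y q k));
          q' = (\<lambda>i. if i < n then exp (- y i * ip d v' (x i)) / (\<Sum>j<n. exp (- y j * ip d v' (x j))) else 0)
      in (v', q', \<lambda>k. s / (s + 1) * (g k - Atp n x y q' k)))"
    by (simp only: accp.simps(2) e Let_def case_prod_conv s_def)
  ultimately show ?v and ?q and ?g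
    by (simp_all only: vT_def accp_q_def accp_g_def Let_def fst_conv snd_conv)
qed

definition accp_w :: "nat \<Rightarrow> nat \<Rightarrow> (nat \<Rightarrow> nat \<Rightarrow> real) \<Rightarrow> (nat \<Rightarrow> real) \<Rightarrow> nat \<Rightarrow> nat \<Rightarrow> real" where
  "accp_w n d x y = oftl_iterate d (\<lambda>j. Atp n x y (accp_q n d x y j))"

lemma accp_g_eq:
  "accp_g n d x y t k = - weighted_sum (\<lambda>j. Atp n x y (accp_q n d x y j)) t k / (real t + 1)"
proof (induction t)
  case 0
  then show ?case by (simp add: accp_g_def weighted_sum_def)
next
  case (Suc t)
  then show ?case
    by (simp add: accp_Suc(3) weighted_sum_Suc field_simps)
qed

lemma vT_eq: "k < d \<Longrightarrow> vT n d x y t k = (\<Sum>s=1..t. real s * accp_w n d x y s k) / 4"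
proof (induction t)
  case 0
  then show ?case by (simp add: vT_def)
next
  case (Suc t)
  let ?s = "real (Suc t)"
  have "?s * accp_w n d x y (Suc t) k / 4
      = - (?s / (2 * (?s + 1)) * (accp_g n d x y t k - Atp n x y (accp_q n d x y t) k))"
  proof -
    have "s * ((W + s * A) / (s * D / 2)) / 4 = - (s / (2 * D) * (- W / s - A))"
      if "s \<noteq> 0" "D \<noteq> 0" for s D W A :: real
      using that by (simp add: field_simps)
    from this[of ?s "?s + 1" "weighted_sum (\<lambda>j. Atp n x y (accp_q n d x y j)) t k"
        "Atp n x y (accp_q n d x y t) k"]
    show ?thesis
      using Suc.prems by (simp add: accp_g_eq accp_w_def oftl_iterate_def tri_def)
  qed
  then show ?case
    using Suc by (simp add: accp_Suc(1) add_divide_distrib)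
qed

lemma accp_q_eq_gibbs:
  "1 \<le> t \<Longrightarrow> accp_q n d x y t = gibbs n 4 (\<lambda>i. 4 * (y i * ip d (x i) (vT n d x y t)))"
  by (cases t) (auto simp: accp_Suc(2) gibbs_def ip_comm[of d "x _"])

lemma accp_q_in_simplex: "0 < n \<Longrightarrow> accp_q n d x y t \<in> simplex n"
  by (cases "t = 0") (simp add: accp_q_def unif_in_simplex, simp add: accp_q_eq_gibbs gibbs_in_simplex)

lemma sum_margin_accp_w_eq:
  "(\<Sum>s=1..t. real s * (y i * ip d (x i) (accp_w n d x y s))) = 4 * (y i * ip d (x i) (vT n d x y t))"
proof -
  have "ip d (x i) (vT n d x y t) = ip d (x i) (\<lambda>k. (\<Sum>s=1..t. real s * accp_w n d x y s k) / 4)"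
    by (rule ip_cong_right) (simp add: vT_eq)
  then show ?thesis
    by (simp add: ip_divide_right ip_sum_right sum_distrib_left algebra_simps)
qed

lemma accp_game_dyn:
  assumes n: "0 < n"
  shows "game_dyn n d x y T (accp_w n d x y) (accp_q n d x y)"
  unfolding game_dyn_def
proof (intro conjI ballI)
  show "accp_q n d x y 0 = unif n" by (simp add: accp_q_def)
next
  fix t assume t: "t \<in> {1..T}"
  show "accp_w n d x y t \<in> Rd d"
    by (simp add: accp_w_def oftl_iterate_in_Rd)
  show "accp_q n d x y t \<in> simplex n"
    by (rule accp_q_in_simplex[OF n])
  fix u assume "u \<in> Rd d"
  with t show "(\<Sum>j=1..t-1. real j * hloss n d x y (accp_q n d x y) j (accp_w n d x y t))
        + real t * hloss n d x y (accp_q n d x y) (t - 1) (accp_w n d x y t)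
      \<le> (\<Sum>j=1..t-1. real j * hloss n d x y (accp_q n d x y) j u)
        + real t * hloss n d x y (accp_q n d x y) (t - 1) u"
    using oftl_argmin_iff[where t = t and d = d and w = "accp_w n d x y t"
        and a = "\<lambda>j. Atp n x y (accp_q n d x y j)"]
    by (simp add: hloss_eq_qloss accp_w_def)
next
  fix t q assume t: "t \<in> {1..T}" and q: "q \<in> simplex n"
  let ?c = "\<lambda>i. \<Sum>s=1..t. real s * (y i * ip d (x i) (accp_w n d x y s))"
  have "accp_q n d x y t = gibbs n 4 ?c"
    unfolding sum_margin_accp_w_eq using t by (simp add: accp_q_eq_gibbs)
  then have "ftrl_objective n d x y (accp_w n d x y) t (accp_q n d x y t)
      \<le> ftrl_objective n d x y (accp_w n d x y) t q"
    using gibbs_minimizes_entropic_objective[OF n _ q, of 4 ?c]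
    by (simp add: ftrl_objective_eq_entropic_objective)
  then show "1/4 * (\<Sum>s=1..t. real s * lloss n d x y (accp_w n d x y) s (accp_q n d x y t))
        + DE n (accp_q n d x y t) (unif n)
      \<le> 1/4 * (\<Sum>s=1..t. real s * lloss n d x y (accp_w n d x y) s q) + DE n q (unif n)"
    by (simp add: ftrl_objective_def)
qed

lemma vT_eq_wbar: "1 \<le> T \<Longrightarrow> k < d \<Longrightarrow> vT n d x y T k = tri T / 4 * wbar T (accp_w n d x y) k"
  using tri_pos[of T] by (simp add: vT_eq wbar_eq)

lemma accp_nmargin_lower_bound:
  assumes D: "data_ok n d x y \<gamma>" and T: "1 \<le> T"
  shows "\<gamma> - 8 * ln (real n) / (\<gamma> * real T * (real T + 1)) \<le> nmargin n d x y (vT n d x y T)"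
proof -
  have n: "0 < n" using data_okD[OF D] by simp
  have "nmargin n d x y (vT n d x y T) = nmargin n d x y (wbar T (accp_w n d x y))"
    using T tri_pos[of T] by (intro nmargin_scale[OF n, where c = "tri T / 4"] vT_eq_wbar) simp_all
  moreover have "8 * ln (real n) / (\<gamma> * real T * (real T + 1)) = 4 * ln (real n) / (\<gamma> * tri T)"
    by (simp add: tri_def field_simps)
  ultimately show ?thesis
    using game_dyn_nmargin_lower_bound[OF D T accp_game_dyn[OF n]] by simp
qed

theorem theorem4:
  shows
  "(\<forall>n d x y \<gamma> T w p. data_ok n d x y \<gamma> \<and> 1 \<le> T \<and> game_dyn n d x y T w p \<longrightarrow>
       regret_w n d x y T w p \<le> 2 * (\<Sum>t=1..T. (l1 n (p t) (p (t-1)))\<^sup>2) \<and>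
       regret_p n d x y T w p \<le> 4 * ln (real n) - 2 * (\<Sum>t=1..T. (l1 n (p t) (p (t-1)))\<^sup>2))
   \<and> (\<exists>C>0. \<forall>n d x y \<gamma> T w p. data_ok n d x y \<gamma> \<and> 1 \<le> T \<and> game_dyn n d x y T w p
         \<and> real T \<ge> C * sqrt (ln (real n)) / \<gamma> \<longrightarrow> margin n d x y (wbar T w) \<ge> 0)
   \<and> (\<exists>c>0. \<forall>n d x y \<gamma> T. data_ok n d x y \<gamma> \<and> 1 \<le> T \<longrightarrow>
         nmargin n d x y (vT n d x y T) \<ge> c * (\<gamma> - 8 * ln (real n) / (\<gamma> * real T * (real T + 1))))"
proof -
  let "?regret \<and> ?margin \<and> ?nmargin" = ?thesis
  have ?regret
    using regret_w_le regret_p_le data_okD(1) by blast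
  moreover have ?margin
    by (rule exI[of _ 4]) (auto intro: game_dyn_margin_nonneg)
  moreover have ?nmargin
    by (rule exI[of _ 1]) (auto intro: accp_nmargin_lower_bound)
  ultimately show ?thesis by blast
qed

end
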